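(* Let $(n_k)_{k\ge0}$ be a strictly increasing sequence of positive integers with $n_0=1$ such that for every $\varepsilon>0$ there exists $\lambda\in\mathbb{T}\setminus\{1\}$ with $\sup_{k\ge0}|\lambda^{n_k}-1|\le\varepsilon$ and $|\lambda^{n_k}-1|\to0$ as $k\to\infty$. Then there exists a perfect compact subset $K$ of $\mathbb{T}$ such that the metric space $(K,d_{(n_k)})$ is separable and $|\lambda^{n_k}-1|\to0$ as $k\to\infty$ for every $\lambda\in K$.
   Context: $\mathbb{T}$ is the unit circle. For $\lambda,\mu\in\mathbb{T}$, $d_{(n_k)}(\lambda,\mu)=\sup_{k\ge0}|\lambda^{n_k}-\mu^{n_k}|$; this is a metric on $\mathbb{T}$ when $n_0=1$. *)

theory Defs
  imports "HOL-Analysis.Analysis"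
begin

definition d_seq :: "(nat \<Rightarrow> nat) \<Rightarrow> complex \<Rightarrow> complex \<Rightarrow> real" where
  "d_seq n l m = (SUP k. cmod (l ^ n k - m ^ n k))"

definition separable_wrt :: "(complex \<Rightarrow> complex \<Rightarrow> real) \<Rightarrow> complex set \<Rightarrow> bool" where
  "separable_wrt d K \<longleftrightarrow>
     (\<exists>D. countable D \<and> D \<subseteq> K \<and> (\<forall>x\<in>K. \<forall>e>0. \<exists>y\<in>D. d x y < e))"

definition perfect_set :: "'a::topological_space set \<Rightarrow> bool" where
  "perfect_set K \<longleftrightarrow> K \<noteq> {} \<and> closed K \<and> (\<forall>x\<in>K. x islimpt K)"

end

theory Submission imports Defs begin

(* From the hypothesis pick unimodular L_j \<noteq> 1 with
   |L_j^(n_k) - 1| \<le> 2^-j for all k and L_j^(n_k) \<rightarrow> 1.  For a 0-1 sequence x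
   (a point of the Cantor space {0,1}^\<nat> with the product topology) form the
   infinite product  \<Pi>(x) = \<Prod>_{x_j = 1} L_j.  Since a product of unimodular
   numbers differs from 1 by at most the sum of the individual deviations,
   the partial products satisfy |P_M(x)^(n_k) - P_N(x)^(n_k)| \<le> 2\<cdot>2^-N uniformly
   in x and k.  Hence (using n_0 = 1) \<Pi> is a uniform limit of continuous maps,
   so K = \<Pi>({0,1}^\<nat>) is compact; the finite products are a countable
   d_(n_k)-dense subset of K; flipping the N-th digit moves a point by the
   factor L_N \<noteq> 1, which shows K has no isolated points; and the uniform
   tail bound together with L_j^(n_k) \<rightarrow> 1 gives \<lambda>^(n_k) \<rightarrow> 1 on K. *)

lemma norm_prod_minus_one_le:
  fixes a :: "'i \<Rightarrow> 'a::real_normed_field"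
  assumes "finite A" "\<forall>j\<in>A. norm (a j) = 1"
  shows "norm (prod a A - 1) \<le> (\<Sum>j\<in>A. norm (a j - 1))"
  using assms
proof (induction A rule: finite_induct)
  case empty
  then show ?case by simp
next
  case (insert i A)
  have ai: "norm (a i) = 1" using insert by auto
  have "prod a (insert i A) - 1 = a i * (prod a A - 1) + (a i - 1)"
    using insert by (simp add: algebra_simps)
  then have "norm (prod a (insert i A) - 1) \<le> norm (a i * (prod a A - 1)) + norm (a i - 1)"
    by (metis norm_triangle_ineq)
  also have "\<dots> = norm (prod a A - 1) + norm (a i - 1)" by (simp add: norm_mult ai)
  also have "\<dots> \<le> (\<Sum>j\<in>A. norm (a j - 1)) + norm (a i - 1)" using insert by auto
  finally show ?case using insert by simp
qed

lemma geometric_tail_half: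
  "N \<le> M \<Longrightarrow> (\<Sum>j\<in>{N..<M}. (1/2::real)^j) = 2*(1/2)^N - 2*(1/2)^M"
  by (induction M rule: dec_induct) (simp_all add: power_Suc)

lemma unimodular_power_le_SUP:
  fixes l :: complex
  assumes "cmod l = 1"
  shows "cmod (l ^ n k - 1) \<le> (SUP k. cmod (l ^ n k - 1))"
proof (rule cSUP_upper[OF UNIV_I], rule bdd_aboveI2)
  fix k
  have "cmod (l ^ n k - 1) \<le> cmod (l ^ n k) + cmod (1::complex)" by (rule norm_triangle_ineq4)
  then show "cmod (l ^ n k - 1) \<le> 2" by (simp add: norm_power assms)
qed

definition cantor_seqs :: "(nat \<Rightarrow> real) set" where
  "cantor_seqs = {x. \<forall>j. x j \<in> {0,1}}"

lemma compact_cantor_seqs: "compact cantor_seqs"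
proof -
  have "compactin (product_topology (\<lambda>i. euclideanreal) UNIV) (PiE UNIV (\<lambda>i. {0,1}))"
    by (subst compactin_PiE) auto
  moreover have "PiE UNIV (\<lambda>i. {0::real,1}) = cantor_seqs"
    by (auto simp: cantor_seqs_def PiE_UNIV_domain)
  ultimately have "compact (PiE UNIV (\<lambda>i. {0::real,1}))" "PiE UNIV (\<lambda>i. {0::real,1}) = cantor_seqs"
    by (simp_all add: euclidean_product_topology)
  then show ?thesis by metis
qed

lemma cantor_seqs_update: "x \<in> cantor_seqs \<Longrightarrow> b \<in> {0,1} \<Longrightarrow> x(N := b) \<in> cantor_seqs"
  by (auto simp: cantor_seqs_def)

text \<open>The j-th factor selected by x: L_j if x_j = 1 and 1 if x_j = 0, written
  affinely in x_j so that it depends continuously on x.\<close>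
definition factor :: "(nat \<Rightarrow> complex) \<Rightarrow> (nat \<Rightarrow> real) \<Rightarrow> nat \<Rightarrow> complex" where
  "factor L x j = 1 + of_real (x j) * (L j - 1)"

definition partial_prod :: "(nat \<Rightarrow> complex) \<Rightarrow> nat \<Rightarrow> (nat \<Rightarrow> real) \<Rightarrow> complex" where
  "partial_prod L N x = (\<Prod>j<N. factor L x j)"

definition infinite_prod :: "(nat \<Rightarrow> complex) \<Rightarrow> (nat \<Rightarrow> real) \<Rightarrow> complex" where
  "infinite_prod L x = lim (\<lambda>N. partial_prod L N x)"

lemma factor_cantor: "x \<in> cantor_seqs \<Longrightarrow> factor L x j = (if x j = 1 then L j else 1)"
  by (auto simp: cantor_seqs_def factor_def)

lemma continuous_partial_prod: "continuous_on UNIV (partial_prod L N)"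
  unfolding partial_prod_def factor_def
  by (intro continuous_intros continuous_on_product_then_coordinatewise continuous_on_id)

lemma partial_prod_cantor:
  "x \<in> cantor_seqs \<Longrightarrow> partial_prod L N x = (\<Prod>j\<in>{j\<in>{..<N}. x j = 1}. L j)"
  unfolding partial_prod_def by (subst prod.inter_filter) (auto simp: factor_cantor)

lemma partial_prod_flip:
  assumes "x N = 0" "N < M"
  shows "partial_prod L M (x(N:=1)) = L N * partial_prod L M x"
proof -
  have split: "partial_prod L M y = factor L y N * (\<Prod>j\<in>{..<M}-{N}. factor L y j)" for y
    unfolding partial_prod_def using assms(2) by (subst prod.remove[of _ N]) auto
  have "(\<Prod>j\<in>{..<M}-{N}. factor L (x(N:=1)) j) = (\<Prod>j\<in>{..<M}-{N}. factor L x j)"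
    by (rule prod.cong) (auto simp: factor_def)
  then show ?thesis
    using split[of "x(N:=1)"] split[of x] assms(1) by (simp add: factor_def)
qed

context
  fixes L :: "nat \<Rightarrow> complex" and n :: "nat \<Rightarrow> nat"
  assumes unimodular: "\<And>j. cmod (L j) = 1"
    and powers_small: "\<And>j k. cmod (L j ^ n k - 1) \<le> (1/2)^j"
    and n_0: "n 0 = 1"
    and powers_tendsto: "\<And>j. (\<lambda>k. cmod (L j ^ n k - 1)) \<longlonglongrightarrow> 0"
begin

lemma norm_factor: "x \<in> cantor_seqs \<Longrightarrow> cmod (factor L x j) = 1"
  by (simp add: factor_cantor unimodular)

lemma norm_partial_prod: "x \<in> cantor_seqs \<Longrightarrow> cmod (partial_prod L N x) = 1"
  by (simp add: partial_prod_def prod_norm[symmetric] norm_factor)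

lemma partial_prod_power_deviation:
  assumes "x \<in> cantor_seqs"
  shows "cmod (partial_prod L N x ^ m - 1) \<le> (\<Sum>j<N. cmod (factor L x j ^ m - 1))"
  unfolding partial_prod_def prod_power_distrib
  by (rule norm_prod_minus_one_le) (auto simp: norm_power norm_factor assms)

lemma partial_prod_tail:
  assumes x: "x \<in> cantor_seqs" and NM: "N \<le> M"
  shows "cmod (partial_prod L M x ^ n k - partial_prod L N x ^ n k) \<le> 2*(1/2)^N"
proof -
  define m where "m = n k"
  define Q where "Q = (\<Prod>j\<in>{N..<M}. factor L x j ^ m)"
  have prod_upto: "partial_prod L R x ^ m = (\<Prod>j\<in>{0..<R}. factor L x j ^ m)" for R
    by (simp add: partial_prod_def prod_power_distrib lessThan_atLeast0)
  have "partial_prod L M x ^ m = partial_prod L N x ^ m * Q"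
    unfolding prod_upto Q_def using NM by (simp add: prod.atLeastLessThan_concat)
  then have "partial_prod L M x ^ m - partial_prod L N x ^ m = partial_prod L N x ^ m * (Q - 1)"
    by (simp add: algebra_simps)
  then have "cmod (partial_prod L M x ^ m - partial_prod L N x ^ m) = cmod (Q - 1)"
    by (simp add: norm_mult norm_power norm_partial_prod x)
  also have "\<dots> \<le> (\<Sum>j\<in>{N..<M}. cmod (factor L x j ^ m - 1))"
    unfolding Q_def by (rule norm_prod_minus_one_le) (auto simp: norm_power norm_factor x)
  also have "\<dots> \<le> (\<Sum>j\<in>{N..<M}. (1/2::real)^j)"
    unfolding m_def by (rule sum_mono) (simp add: factor_cantor x powers_small)
  also have "\<dots> \<le> 2*(1/2)^N" using geometric_tail_half[OF NM] by simp
  finally show ?thesis by (simp add: m_def)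
qed

text \<open>With k = 0 (n_0 = 1) the partial products are uniformly Cauchy on the
  Cantor space, hence converge uniformly.\<close>
lemma uniform_limit_partial_prod:
  "uniform_limit cantor_seqs (\<lambda>N. partial_prod L N) (infinite_prod L) sequentially"
proof -
  have "uniformly_Cauchy_on cantor_seqs (\<lambda>N. partial_prod L N)"
  proof (rule uniformly_Cauchy_onI')
    fix e :: real assume e: "e > 0"
    obtain M where M: "(1/2::real)^M < e/2" using real_arch_pow_inv[of "e/2" "1/2"] e by auto
    show "\<exists>M. \<forall>x\<in>cantor_seqs. \<forall>m\<ge>M. \<forall>p>m. dist (partial_prod L m x) (partial_prod L p x) < e"
    proof (intro exI ballI allI impI)
      fix x m p assume x: "x \<in> cantor_seqs" and m: "M \<le> m" and p: "m < p"
      have "dist (partial_prod L m x) (partial_prod L p x) \<le> 2*(1/2)^m"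
        using partial_prod_tail[OF x, of m p 0] p
        by (simp add: n_0 dist_norm norm_minus_commute)
      also have "\<dots> \<le> 2*(1/2)^M" using m by (simp add: power_decreasing)
      finally show "dist (partial_prod L m x) (partial_prod L p x) < e" using M by simp
    qed
  qed
  then show ?thesis
    using Cauchy_uniformly_convergent
    unfolding uniformly_convergent_uniform_limit_iff infinite_prod_def by blast
qed

lemma partial_prod_tendsto:
  "x \<in> cantor_seqs \<Longrightarrow> (\<lambda>N. partial_prod L N x) \<longlonglongrightarrow> infinite_prod L x"
  by (rule tendsto_uniform_limitI[OF uniform_limit_partial_prod])

lemma norm_infinite_prod:
  assumes x: "x \<in> cantor_seqs"
  shows "cmod (infinite_prod L x) = 1"
proof -
  have "(\<lambda>N. cmod (partial_prod L N x)) \<longlonglongrightarrow> cmod (infinite_prod L x)"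
    by (intro tendsto_intros partial_prod_tendsto x)
  then show ?thesis by (simp add: norm_partial_prod x LIMSEQ_const_iff)
qed

lemma infinite_prod_tail:
  assumes x: "x \<in> cantor_seqs"
  shows "cmod (infinite_prod L x ^ n k - partial_prod L N x ^ n k) \<le> 2*(1/2)^N"
proof -
  have "(\<lambda>M. cmod (partial_prod L M x ^ n k - partial_prod L N x ^ n k))
          \<longlonglongrightarrow> cmod (infinite_prod L x ^ n k - partial_prod L N x ^ n k)"
    by (intro tendsto_intros partial_prod_tendsto x)
  then show ?thesis by (rule Lim_bounded) (use partial_prod_tail[OF x] in auto)
qed

lemma infinite_prod_flip:
  assumes x: "x \<in> cantor_seqs" and "x N = 0"
  shows "infinite_prod L (x(N:=1)) = L N * infinite_prod L x"
proof -
  have "(\<lambda>M. L N * partial_prod L M x) \<longlonglongrightarrow> L N * infinite_prod L x"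
    by (intro tendsto_intros partial_prod_tendsto x)
  moreover have "eventually (\<lambda>M. L N * partial_prod L M x = partial_prod L M (x(N:=1))) sequentially"
    using eventually_gt_at_top[of N] by (rule eventually_mono) (simp add: partial_prod_flip assms)
  ultimately have "(\<lambda>M. partial_prod L M (x(N:=1))) \<longlonglongrightarrow> L N * infinite_prod L x"
    by (rule Lim_transform_eventually)
  then show ?thesis
    using partial_prod_tendsto[OF cantor_seqs_update[OF x]] LIMSEQ_unique by blast
qed

abbreviation K :: "complex set" where
  "K \<equiv> infinite_prod L ` cantor_seqs"

lemma K_subset_sphere: "K \<subseteq> sphere 0 1"
  using norm_infinite_prod by auto

lemma compact_K: "compact K"
proof (rule compact_continuous_image[OF _ compact_cantor_seqs])
  show "continuous_on cantor_seqs (infinite_prod L)"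
    by (rule uniform_limit_theorem[OF _ uniform_limit_partial_prod])
       (auto intro!: always_eventually continuous_on_subset[OF continuous_partial_prod])
qed

text \<open>Changing the N-th digit multiplies or divides the infinite product by L_N,
  so it moves the point by exactly |L_N - 1|.\<close>
lemma dist_change_digit:
  assumes x: "x \<in> cantor_seqs"
  shows "dist (infinite_prod L (x(N := 1 - x N))) (infinite_prod L x) = cmod (L N - 1)"
proof -
  have rotate: "dist (L N * u) u = cmod (L N - 1)" if "cmod u = 1" for u
  proof -
    have "dist (L N * u) u = cmod ((L N - 1) * u)" by (simp add: dist_norm algebra_simps)
    then show ?thesis by (simp add: norm_mult that)
  qed
  consider "x N = 0" | "x N = 1" using x by (auto simp: cantor_seqs_def)
  then show ?thesis
  proof cases
    case 1
    then show ?thesis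
      using infinite_prod_flip[OF x 1] rotate[OF norm_infinite_prod[OF x]] by simp
  next
    case 2
    define x0 where "x0 = x(N := 0)"
    have x0: "x0 \<in> cantor_seqs" "x0 N = 0" using cantor_seqs_update[OF x] by (auto simp: x0_def)
    have "x = x0(N := 1)" using 2 by (auto simp: x0_def)
    then have "infinite_prod L x = L N * infinite_prod L x0" using infinite_prod_flip[OF x0] by simp
    then show ?thesis
      using rotate[OF norm_infinite_prod[OF x0(1)]] 2 by (simp add: x0_def dist_commute)
  qed
qed

text \<open>K has no isolated points: changing a far-out digit N gives a different
  point of K at distance |L_N - 1| \<le> 2^-N.\<close>
lemma islimpt_K:
  assumes L_ne_1: "\<And>j. L j \<noteq> 1" and y: "y \<in> K"
  shows "y islimpt K"
proof (unfold islimpt_approachable, intro allI impI)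
  fix e :: real assume e: "e > 0"
  obtain N where N: "(1/2::real)^N < e" using real_arch_pow_inv[of e "1/2"] e by auto
  have LN: "cmod (L N - 1) < e" using powers_small[of N 0] N n_0 by simp
  obtain x where x: "x \<in> cantor_seqs" "y = infinite_prod L x" using y by blast
  define z where "z = infinite_prod L (x(N := 1 - x N))"
  have "x(N := 1 - x N) \<in> cantor_seqs" using x(1) by (auto simp: cantor_seqs_def)
  then have "z \<in> K" by (simp add: z_def)
  moreover have "dist z y = cmod (L N - 1)" unfolding z_def x(2) by (rule dist_change_digit[OF x(1)])
  ultimately show "\<exists>z\<in>K. z \<noteq> y \<and> dist z y < e"
    using LN L_ne_1[of N] by (metis dist_eq_0_iff eq_iff_diff_eq_0 norm_eq_zero)
qed

lemma perfect_K: "(\<And>j. L j \<noteq> 1) \<Longrightarrow> perfect_set K"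
  unfolding perfect_set_def
proof (intro conjI ballI islimpt_K)
  have "(\<lambda>_. 0) \<in> cantor_seqs" by (simp add: cantor_seqs_def)
  then show "K \<noteq> {}" by blast
  show "closed K" using compact_K by (rule compact_imp_closed)
qed

text \<open>The finite products of the L_j are a countable subset of K which is dense
  for d_(n_k): the partial product P_N(x) lies within 2\<cdot>2^-N of \<Pi>(x).\<close>
lemma separable_K: "separable_wrt (d_seq n) K"
  unfolding separable_wrt_def
proof (intro exI conjI ballI allI impI)
  define D where "D = (\<Union>N. partial_prod L N ` cantor_seqs)"
  have D_eq: "D = (\<Union>N. (\<lambda>S. \<Prod>j\<in>S. L j) ` {S. S \<subseteq> {..<N}})"
  proof -
    have "partial_prod L N ` cantor_seqs = (\<lambda>S. \<Prod>j\<in>S. L j) ` {S. S \<subseteq> {..<N}}" for N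
    proof (intro equalityI subsetI)
      fix z assume "z \<in> (\<lambda>S. \<Prod>j\<in>S. L j) ` {S. S \<subseteq> {..<N}}"
      then obtain S where S: "S \<subseteq> {..<N}" "z = (\<Prod>j\<in>S. L j)" by auto
      define x where "x = (\<lambda>j. if j \<in> S then 1 else (0::real))"
      have "x \<in> cantor_seqs" "{j\<in>{..<N}. x j = 1} = S" using S(1) by (auto simp: x_def cantor_seqs_def)
      then show "z \<in> partial_prod L N ` cantor_seqs"
        using partial_prod_cantor[of x] S(2) by (metis image_eqI)
    qed (auto simp: partial_prod_cantor)
    then show ?thesis by (simp add: D_def)
  qed
  show "countable D" unfolding D_eq
    by (intro countable_UN[OF countableI_type] countable_finite finite_imageI) simp
  show "D \<subseteq> K"
  proof
    fix z assume "z \<in> D"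
    then obtain N x where x: "x \<in> cantor_seqs" "z = partial_prod L N x" by (auto simp: D_def)
    define x' where "x' = (\<lambda>j. if j < N then x j else 0)"
    have x': "x' \<in> cantor_seqs" using x(1) by (auto simp: x'_def cantor_seqs_def)
    have "eventually (\<lambda>M. partial_prod L M x' = z) sequentially"
    proof (rule eventually_mono[OF eventually_ge_at_top[of N]])
      fix M assume "N \<le> M"
      then have "{j\<in>{..<M}. x' j = 1} = {j\<in>{..<N}. x j = 1}" by (auto simp: x'_def)
      then show "partial_prod L M x' = z" using x x' by (simp add: partial_prod_cantor)
    qed
    then have "(\<lambda>M. partial_prod L M x') \<longlonglongrightarrow> z" by (rule tendsto_eventually)
    then have "infinite_prod L x' = z" by (rule LIMSEQ_unique[OF partial_prod_tendsto[OF x']])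
    then show "z \<in> K" using x' by blast
  qed
  fix y and e :: real assume y: "y \<in> K" and e: "e > 0"
  obtain x where x: "x \<in> cantor_seqs" "y = infinite_prod L x" using y by blast
  obtain N where N: "(1/2::real)^N < e/4" using real_arch_pow_inv[of "e/4" "1/2"] e by auto
  have "d_seq n y (partial_prod L N x) \<le> 2*(1/2)^N"
    unfolding d_seq_def x(2) by (rule cSUP_least) (auto intro: infinite_prod_tail[OF x(1)])
  then have "d_seq n y (partial_prod L N x) < e" using N zero_le_power[of "1/2::real" N] by linarith
  moreover have "partial_prod L N x \<in> D" using x(1) by (auto simp: D_def)
  ultimately show "\<exists>z\<in>D. d_seq n y z < e" by blast
qed

text \<open>Each point of K satisfies \<lambda>^(n_k) \<rightarrow> 1: the first N factors tend to 1
  individually, and the remaining ones contribute at most 2\<cdot>2^-N uniformly in k.\<close>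
lemma powers_tendsto_on_K:
  assumes x: "x \<in> cantor_seqs"
  shows "(\<lambda>k. cmod (infinite_prod L x ^ n k - 1)) \<longlonglongrightarrow> 0"
proof (rule LIMSEQ_I)
  fix r :: real assume r: "r > 0"
  obtain N where N: "(1/2::real)^N < r/4" using real_arch_pow_inv[of "r/4" "1/2"] r by auto
  have "(\<lambda>k. \<Sum>j<N. cmod (factor L x j ^ n k - 1)) \<longlonglongrightarrow> 0"
    by (intro tendsto_null_sum) (simp add: factor_cantor x powers_tendsto)
  then have "eventually (\<lambda>k. (\<Sum>j<N. cmod (factor L x j ^ n k - 1)) < r/2) sequentially"
    using r by (intro order_tendstoD(2)) auto
  then obtain k0 where k0: "\<And>k. k \<ge> k0 \<Longrightarrow> (\<Sum>j<N. cmod (factor L x j ^ n k - 1)) < r/2"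
    by (auto simp: eventually_sequentially)
  show "\<exists>k0. \<forall>k\<ge>k0. norm (cmod (infinite_prod L x ^ n k - 1) - 0) < r"
  proof (intro exI allI impI)
    fix k assume k: "k \<ge> k0"
    have "cmod (infinite_prod L x ^ n k - 1)
        \<le> cmod (infinite_prod L x ^ n k - partial_prod L N x ^ n k) + cmod (partial_prod L N x ^ n k - 1)"
      by (metis diff_add_cancel norm_triangle_ineq add_diff_eq)
    also have "\<dots> \<le> 2*(1/2)^N + (\<Sum>j<N. cmod (factor L x j ^ n k - 1))"
      by (intro add_mono infinite_prod_tail partial_prod_power_deviation x)
    finally show "norm (cmod (infinite_prod L x ^ n k - 1) - 0) < r" using k0[OF k] N by simp
  qed
qed

end

lemma exists_small_unimodular_sequence:
  assumes "\<forall>\<epsilon>>0. \<exists>l::complex. cmod l = 1 \<and> l \<noteq> 1 \<and>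
            (SUP k. cmod (l ^ n k - 1)) \<le> \<epsilon> \<and> ((\<lambda>k. cmod (l ^ n k - 1)) \<longlonglongrightarrow> 0)"
  obtains L :: "nat \<Rightarrow> complex" where "\<And>j. cmod (L j) = 1" "\<And>j. L j \<noteq> 1"
    "\<And>j k. cmod (L j ^ n k - 1) \<le> (1/2)^j" "\<And>j. (\<lambda>k. cmod (L j ^ n k - 1)) \<longlonglongrightarrow> 0"
proof -
  have "\<forall>j. \<exists>l::complex. cmod l = 1 \<and> l \<noteq> 1 \<and>
          (SUP k. cmod (l ^ n k - 1)) \<le> (1/2)^j \<and> ((\<lambda>k. cmod (l ^ n k - 1)) \<longlonglongrightarrow> 0)"
    using assms by simp
  then obtain L where L: "\<And>j. cmod (L j) = 1" "\<And>j. L j \<noteq> 1"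
    "\<And>j. (SUP k. cmod (L j ^ n k - 1)) \<le> (1/2)^j" "\<And>j. (\<lambda>k. cmod (L j ^ n k - 1)) \<longlonglongrightarrow> 0"
    by metis
  have "cmod (L j ^ n k - 1) \<le> (1/2)^j" for j k
    by (rule order_trans[OF unimodular_power_le_SUP[OF L(1)] L(3)])
  then show ?thesis by (rule that[OF L(1,2) _ L(4)])
qed

theorem lemma4p3:
  fixes n :: "nat \<Rightarrow> nat"
  assumes "strict_mono n" and "\<forall>k. n k > 0" and "n 0 = 1"
    and "\<forall>\<epsilon>>0. \<exists>l::complex. cmod l = 1 \<and> l \<noteq> 1 \<and>
            (SUP k. cmod (l ^ n k - 1)) \<le> \<epsilon> \<and>
            ((\<lambda>k. cmod (l ^ n k - 1)) \<longlonglongrightarrow> 0)"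
  shows "\<exists>K \<subseteq> sphere (0::complex) 1. perfect_set K \<and> compact K \<and>
           separable_wrt (d_seq n) K \<and>
           (\<forall>l\<in>K. (\<lambda>k. cmod (l ^ n k - 1)) \<longlonglongrightarrow> 0)"
proof -
  obtain L where L: "\<And>j. cmod (L j) = 1" "\<And>j. L j \<noteq> 1"
    "\<And>j k. cmod (L j ^ n k - 1) \<le> (1/2)^j" "\<And>j. (\<lambda>k. cmod (L j ^ n k - 1)) \<longlonglongrightarrow> 0"
    using exists_small_unimodular_sequence[OF assms(4)] by blast
  note props = L(1,3) assms(3) L(4)
  show ?thesis
  proof (intro exI conjI)
    show "infinite_prod L ` cantor_seqs \<subseteq> sphere 0 1" by (rule K_subset_sphere[OF props])
    show "perfect_set (infinite_prod L ` cantor_seqs)" by (rule perfect_K[OF props L(2)])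
    show "compact (infinite_prod L ` cantor_seqs)" by (rule compact_K[OF props])
    show "separable_wrt (d_seq n) (infinite_prod L ` cantor_seqs)" by (rule separable_K[OF props])
    show "\<forall>l\<in>infinite_prod L ` cantor_seqs. (\<lambda>k. cmod (l ^ n k - 1)) \<longlonglongrightarrow> 0"
      using powers_tendsto_on_K[OF props] by blast
  qed
qed

end
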